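(* Let $d\in\mathbb{N}$, $c>0$ and $0<a<1$, and let $\{V, V_{i,n}: i,n\in\mathbb{N}_0\}$ be a family of i.i.d., almost surely nonnegative random variables on a probability space with measure $Q$. Then $E_Q[(\log_+V)^d]<\infty$ if and only if $$\sum_{n\in\mathbb{N}_0}a^n\sum_{i=0}^{\lfloor c\,n^{d-1}\rfloor}V_{i,n}<\infty\quad Q\text{-a.s.}$$
   Context: $\log_+x=\max(\log x,0)$; $\lfloor\cdot\rfloor$ is the integer part; the convention $0^0=1$ is used for $n=0$, $d=1$. *)

theory Defs
  imports "HOL-Probability.Probability"
begin

definition log_plus :: "real \<Rightarrow> real" where
  "log_plus x = (if x \<le> 1 then 0 else ln x)"

end

theory Submission
  imports Defs
begin

text \<open>
  Put \<open>Y = log_plus V\<close>. The moment \<open>E[Y^d]\<close> is finite iff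
  \<open>\<Sum>n. n^(d-1) P(Y \<ge> n \<epsilon>)\<close> converges, for any fixed \<open>\<epsilon> > 0\<close>, and
  \<open>P(Y \<ge> n \<epsilon>) = P(V \<ge> exp (n \<epsilon>))\<close>. Row \<open>n\<close> of the series has about \<open>c n^(d-1)\<close>
  terms, so this sum is comparable to the expected number of pairs \<open>(i, n)\<close> with
  \<open>W i n \<ge> exp (n \<epsilon>)\<close>. If it is finite for \<open>exp \<epsilon> = 1 / sqrt a\<close>, the Borel--Cantelli
  lemma bounds all \<open>W i n\<close> in late rows by \<open>sqrt a ^ n / a ^ n\<close>, so the series is dominated
  by \<open>\<Sum>n. (c + 1) n^(d-1) sqrt a ^ n\<close>. If it is infinite for \<open>exp \<epsilon> = 1 / a\<close>, the second
  Borel--Cantelli lemma, applied to the independent events grouped row by row, gives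
  \<open>a ^ n W i n \<ge> 1\<close> infinitely often, so the terms of the series do not tend to \<open>0\<close>.
\<close>

lemma summable_power_mult_geometric:
  fixes r :: real
  assumes "0 \<le> r" "r < 1"
  shows "summable (\<lambda>n. real n ^ k * r ^ n)"
proof (rule root_test_convergence)
  have "(\<lambda>n. root n (real n) ^ k * r) \<longlonglongrightarrow> 1 ^ k * r"
    by (intro tendsto_intros LIMSEQ_root)
  moreover have "\<forall>\<^sub>F n in sequentially. root n (norm (real n ^ k * r ^ n)) = root n (real n) ^ k * r"
    using eventually_gt_at_top[of "0::nat"]
    by eventually_elim (use assms in \<open>simp add: real_root_mult real_root_power abs_mult real_root_pos2\<close>)
  ultimately show "(\<lambda>n. root n (norm (real n ^ k * r ^ n))) \<longlonglongrightarrow> r"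
    by (simp add: tendsto_cong)
qed (fact assms)

lemma add_one_power_le:
  fixes z :: real
  assumes "0 \<le> z"
  shows "(z + 1) ^ n \<le> 2 ^ n * (z ^ n + 1)"
proof (cases "z \<le> 1")
  case True
  then have "(z + 1) ^ n \<le> 2 ^ n" using assms by (intro power_mono) auto
  also have "\<dots> \<le> 2 ^ n * (z ^ n + 1)" using assms by simp
  finally show ?thesis .
next
  case False
  then have "(z + 1) ^ n \<le> (2 * z) ^ n" by (intro power_mono) auto
  also have "\<dots> \<le> 2 ^ n * (z ^ n + 1)" by (simp add: power_mult_distrib)
  finally show ?thesis .
qed

lemma sum_power_atMost_floor_le:
  fixes z :: real
  assumes "0 \<le> z"
  shows "(\<Sum>n\<le>nat \<lfloor>z\<rfloor>. real n ^ k) \<le> (z + 1) ^ Suc k"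
proof -
  have "(\<Sum>n\<le>nat \<lfloor>z\<rfloor>. real n ^ k) \<le> (\<Sum>n\<le>nat \<lfloor>z\<rfloor>. z ^ k)"
    by (intro sum_mono power_mono) (use assms in \<open>auto simp: le_nat_iff le_floor_iff\<close>)
  also have "\<dots> = (real (nat \<lfloor>z\<rfloor>) + 1) * z ^ k" by simp
  also have "\<dots> \<le> (z + 1) * (z + 1) ^ k"
    using assms by (intro mult_mono power_mono) auto
  finally show ?thesis by simp
qed

lemma add_one_power_Suc_diff_le:
  fixes x :: real
  assumes "0 \<le> x"
  shows "(x + 1) ^ Suc k - x ^ Suc k \<le> real (Suc k) * (x + 1) ^ k"
proof -
  have "(x + 1) ^ Suc k - x ^ Suc k = (\<Sum>p<Suc k. (x + 1) ^ p * x ^ (k - p))"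
    using diff_power_eq_sum[of "x + 1" k x] by simp
  also have "\<dots> \<le> (\<Sum>p<Suc k. (x + 1) ^ p * (x + 1) ^ (k - p))"
    using assms by (intro sum_mono mult_left_mono power_mono) auto
  also have "\<dots> = (\<Sum>p<Suc k. (x + 1) ^ k)"
    by (intro sum.cong) (auto simp: power_add[symmetric])
  finally show ?thesis by simp
qed

lemma power_Suc_le_sum_power: "real m ^ Suc k \<le> real (Suc k) * (\<Sum>n\<le>m. real n ^ k)"
proof (induction m)
  case (Suc m)
  have "real (Suc m) ^ Suc k \<le> real m ^ Suc k + real (Suc k) * real (Suc m) ^ k"
    using add_one_power_Suc_diff_le[of "real m" k] by (simp add: add.commute)
  with Suc show ?case by (simp add: algebra_simps)
qed simp

lemma power_Suc_le_sum_power_floor: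
  fixes z :: real
  assumes "0 \<le> z"
  shows "z ^ Suc k \<le> 2 ^ Suc k * (real (Suc k) * (\<Sum>n\<le>nat \<lfloor>z\<rfloor>. real n ^ k) + 1)"
proof -
  define m where "m = nat \<lfloor>z\<rfloor>"
  have "z ^ Suc k \<le> (real m + 1) ^ Suc k"
    unfolding m_def using assms by (intro power_mono) linarith+
  also have "\<dots> \<le> 2 ^ Suc k * (real m ^ Suc k + 1)"
    by (rule add_one_power_le) simp
  also have "\<dots> \<le> 2 ^ Suc k * (real (Suc k) * (\<Sum>n\<le>m. real n ^ k) + 1)"
    using power_Suc_le_sum_power[of m k] by (intro mult_left_mono) auto
  finally show ?thesis unfolding m_def .
qed

lemma suminf_emeasure_tail_eq_nn_integral:
  fixes f :: "nat \<Rightarrow> ennreal"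
  assumes [measurable]: "Z \<in> borel_measurable M" and Z_nonneg: "\<And>x. x \<in> space M \<Longrightarrow> 0 \<le> Z x"
  shows "(\<Sum>n. f n * emeasure M {x\<in>space M. real n \<le> Z x}) = (\<integral>\<^sup>+x. (\<Sum>n\<le>nat \<lfloor>Z x\<rfloor>. f n) \<partial>M)"
proof -
  have "(\<Sum>n. f n * emeasure M {x\<in>space M. real n \<le> Z x})
      = (\<Sum>n. \<integral>\<^sup>+x. f n * indicator {x\<in>space M. real n \<le> Z x} x \<partial>M)"
    by (simp add: nn_integral_cmult_indicator)
  also have "\<dots> = (\<integral>\<^sup>+x. (\<Sum>n. f n * indicator {x\<in>space M. real n \<le> Z x} x) \<partial>M)"
    by (rule nn_integral_suminf[symmetric]) measurable
  also have "\<dots> = (\<integral>\<^sup>+x. (\<Sum>n\<le>nat \<lfloor>Z x\<rfloor>. f n) \<partial>M)"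
  proof (rule nn_integral_cong)
    fix x assume x: "x \<in> space M"
    have le_iff: "real n \<le> Z x \<longleftrightarrow> n \<le> nat \<lfloor>Z x\<rfloor>" for n
      using Z_nonneg[OF x] by linarith
    have "(\<Sum>n. f n * indicator {x\<in>space M. real n \<le> Z x} x)
        = (\<Sum>n\<le>nat \<lfloor>Z x\<rfloor>. f n * indicator {x\<in>space M. real n \<le> Z x} x)"
      by (rule suminf_finite) (auto simp: x le_iff)
    then show "(\<Sum>n. f n * indicator {x\<in>space M. real n \<le> Z x} x) = (\<Sum>n\<le>nat \<lfloor>Z x\<rfloor>. f n)"
      by (simp add: x le_iff)
  qed
  finally show ?thesis .
qed

lemma nn_integral_less_top_if_affine_bound:
  fixes f g :: "'a \<Rightarrow> real"
  assumes "finite_measure M" and [measurable]: "g \<in> borel_measurable M"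
    and "0 \<le> C" "0 \<le> D"
    and bound: "\<And>x. x \<in> space M \<Longrightarrow> f x \<le> C * g x + D"
    and g_nonneg: "\<And>x. x \<in> space M \<Longrightarrow> 0 \<le> g x"
    and "(\<integral>\<^sup>+x. ennreal (g x) \<partial>M) < \<infinity>"
  shows "(\<integral>\<^sup>+x. ennreal (f x) \<partial>M) < \<infinity>"
proof -
  interpret finite_measure M by fact
  have "(\<integral>\<^sup>+x. ennreal (f x) \<partial>M) \<le> (\<integral>\<^sup>+x. ennreal C * ennreal (g x) + ennreal D \<partial>M)"
  proof (rule nn_integral_mono)
    fix x assume x: "x \<in> space M"
    have "ennreal (f x) \<le> ennreal (C * g x + D)"
      using bound[OF x] by (rule ennreal_leI)
    then show "ennreal (f x) \<le> ennreal C * ennreal (g x) + ennreal D"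
      using assms(3,4) g_nonneg[OF x] by (simp add: ennreal_mult ennreal_plus)
  qed
  also have "\<dots> = ennreal C * (\<integral>\<^sup>+x. ennreal (g x) \<partial>M) + ennreal D * emeasure M (space M)"
    by (simp add: nn_integral_add nn_integral_cmult)
  also have "\<dots> < \<infinity>"
    using assms(7) by (simp add: ennreal_mult_eq_top_iff less_top[symmetric])
  finally show ?thesis .
qed

lemma nn_integral_power_less_top_iff_summable_tail:
  fixes Z :: "'a \<Rightarrow> real"
  assumes "finite_measure M" and [measurable]: "Z \<in> borel_measurable M"
    and Z_nonneg: "\<And>x. x \<in> space M \<Longrightarrow> 0 \<le> Z x"
  shows "(\<integral>\<^sup>+x. ennreal (Z x ^ Suc k) \<partial>M) < \<infinity> \<longleftrightarrow>
    summable (\<lambda>n. real n ^ k * measure M {x\<in>space M. real n \<le> Z x})"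
proof -
  interpret finite_measure M by fact
  define S where "S x = (\<Sum>n\<le>nat \<lfloor>Z x\<rfloor>. real n ^ k)" for x
  have [measurable]: "S \<in> borel_measurable M"
    unfolding S_def by measurable
  have S_nonneg: "0 \<le> S x" for x
    by (simp add: S_def sum_nonneg)
  have "(\<Sum>n. ennreal (real n ^ k * measure M {x\<in>space M. real n \<le> Z x}))
      = (\<Sum>n. ennreal (real n ^ k) * emeasure M {x\<in>space M. real n \<le> Z x})"
    by (simp add: emeasure_eq_measure ennreal_mult)
  also have "\<dots> = (\<integral>\<^sup>+x. ennreal (S x) \<partial>M)"
    by (subst suminf_emeasure_tail_eq_nn_integral) (auto simp: Z_nonneg S_def)
  finally have tail_eq: "(\<Sum>n. ennreal (real n ^ k * measure M {x\<in>space M. real n \<le> Z x}))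
      = (\<integral>\<^sup>+x. ennreal (S x) \<partial>M)" .
  have S_le: "S x \<le> 2 ^ Suc k * Z x ^ Suc k + 2 ^ Suc k" if "x \<in> space M" for x
  proof -
    have "S x \<le> (Z x + 1) ^ Suc k"
      unfolding S_def by (rule sum_power_atMost_floor_le[OF Z_nonneg[OF that]])
    also have "\<dots> \<le> 2 ^ Suc k * (Z x ^ Suc k + 1)"
      by (rule add_one_power_le[OF Z_nonneg[OF that]])
    finally show ?thesis by (simp only: distrib_left mult_1_right)
  qed
  have Z_le: "Z x ^ Suc k \<le> 2 ^ Suc k * real (Suc k) * S x + 2 ^ Suc k" if "x \<in> space M" for x
    using power_Suc_le_sum_power_floor[OF Z_nonneg[OF that], of k] by (simp add: S_def algebra_simps)
  have "(\<integral>\<^sup>+x. ennreal (Z x ^ Suc k) \<partial>M) < \<infinity> \<longleftrightarrow> (\<integral>\<^sup>+x. ennreal (S x) \<partial>M) < \<infinity>"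
  proof
    assume "(\<integral>\<^sup>+x. ennreal (Z x ^ Suc k) \<partial>M) < \<infinity>"
    then show "(\<integral>\<^sup>+x. ennreal (S x) \<partial>M) < \<infinity>"
      using Z_nonneg by (intro nn_integral_less_top_if_affine_bound[OF assms(1) _ _ _ S_le]) auto
  next
    assume "(\<integral>\<^sup>+x. ennreal (S x) \<partial>M) < \<infinity>"
    then show "(\<integral>\<^sup>+x. ennreal (Z x ^ Suc k) \<partial>M) < \<infinity>"
      using S_nonneg by (intro nn_integral_less_top_if_affine_bound[OF assms(1) _ _ _ Z_le]) auto
  qed
  also have "\<dots> \<longleftrightarrow> summable (\<lambda>n. real n ^ k * measure M {x\<in>space M. real n \<le> Z x})"
  proof
    assume "(\<integral>\<^sup>+x. ennreal (S x) \<partial>M) < \<infinity>"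
    then show "summable (\<lambda>n. real n ^ k * measure M {x\<in>space M. real n \<le> Z x})"
      by (intro summable_suminf_not_top) (auto simp: tail_eq)
  next
    assume "summable (\<lambda>n. real n ^ k * measure M {x\<in>space M. real n \<le> Z x})"
    from ennreal_suminf_neq_top[OF this] show "(\<integral>\<^sup>+x. ennreal (S x) \<partial>M) < \<infinity>"
      by (simp add: tail_eq less_top)
  qed
  finally show ?thesis .
qed

lemma nn_integral_power_less_top_iff_summable_scaled_tail:
  fixes Y :: "'a \<Rightarrow> real"
  assumes "finite_measure M" and [measurable]: "Y \<in> borel_measurable M"
    and Y_nonneg: "\<And>x. x \<in> space M \<Longrightarrow> 0 \<le> Y x" and "0 < \<epsilon>"
  shows "(\<integral>\<^sup>+x. ennreal (Y x ^ Suc k) \<partial>M) < \<infinity> \<longleftrightarrow>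
    summable (\<lambda>n. real n ^ k * measure M {x\<in>space M. real n * \<epsilon> \<le> Y x})"
proof -
  have "(\<integral>\<^sup>+x. ennreal (Y x ^ Suc k) \<partial>M)
      = ennreal (\<epsilon> ^ Suc k) * (\<integral>\<^sup>+x. ennreal ((Y x / \<epsilon>) ^ Suc k) \<partial>M)"
    using \<open>0 < \<epsilon>\<close> Y_nonneg
    by (subst nn_integral_cmult[symmetric])
       (auto intro!: nn_integral_cong simp: ennreal_mult[symmetric] power_divide)
  then have "(\<integral>\<^sup>+x. ennreal (Y x ^ Suc k) \<partial>M) < \<infinity> \<longleftrightarrow>
      (\<integral>\<^sup>+x. ennreal ((Y x / \<epsilon>) ^ Suc k) \<partial>M) < \<infinity>"
    using \<open>0 < \<epsilon>\<close> by (auto simp: ennreal_mult_less_top)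
  also have "\<dots> \<longleftrightarrow> summable (\<lambda>n. real n ^ k * measure M {x\<in>space M. real n \<le> Y x / \<epsilon>})"
    using Y_nonneg \<open>0 < \<epsilon>\<close> by (intro nn_integral_power_less_top_iff_summable_tail[OF assms(1)]) auto
  finally show ?thesis
    using \<open>0 < \<epsilon>\<close> by (simp add: pos_le_divide_eq)
qed

lemma measure_Collect_eq_if_distr_eq:
  assumes "distr M N X = distr M N Y" "X \<in> measurable M N" "Y \<in> measurable M N"
    and "{y\<in>space N. P y} \<in> sets N"
  shows "measure M {x\<in>space M. P (X x)} = measure M {x\<in>space M. P (Y x)}"
proof -
  have "{x\<in>space M. P (Z x)} = Z -` {y\<in>space N. P y} \<inter> space M" if "Z \<in> measurable M N" for Z
    using measurable_space[OF that] by auto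
  then show ?thesis
    using measure_distr[OF assms(2,4)] measure_distr[OF assms(3,4)] assms(1,2,3) by simp
qed

lemma (in prob_space) prob_le_exp_neg_sum_if_subset_indep_events:
  assumes "indep_events B I" "finite F" "F \<subseteq> I" "A \<in> events" "A \<subseteq> (\<Inter>j\<in>F. B j)"
  shows "prob A \<le> exp (- (\<Sum>j\<in>F. 1 - prob (B j)))"
proof (cases "F = {}")
  case False
  have "B j \<in> events" if "j \<in> F" for j
    using assms(1,3) that by (auto simp: indep_events_def)
  then have "(\<Inter>j\<in>F. B j) \<in> events"
    using assms(2) False by (intro sets.finite_INT) auto
  with assms(5) have "prob A \<le> prob (\<Inter>j\<in>F. B j)"
    by (rule finite_measure_mono)
  also have "\<dots> = (\<Prod>j\<in>F. prob (B j))"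
    using assms False unfolding indep_events_def by blast
  also have "\<dots> \<le> (\<Prod>j\<in>F. exp (- (1 - prob (B j))))"
  proof (intro prod_mono conjI)
    fix j
    show "prob (B j) \<le> exp (- (1 - prob (B j)))"
      using exp_ge_add_one_self[of "prob (B j) - 1"] by simp
  qed simp
  also have "\<dots> = exp (- (\<Sum>j\<in>F. 1 - prob (B j)))"
    using exp_sum[OF assms(2), of "\<lambda>j. - (1 - prob (B j))"] by (simp flip: sum_negf)
  finally show ?thesis .
qed simp

lemma unbounded_tail_sums_if_not_summable:
  fixes f :: "nat \<Rightarrow> real"
  assumes f_nonneg: "\<And>n. 0 \<le> f n" and "\<not> summable f"
  shows "\<exists>m. T < (\<Sum>n\<in>{N..m}. f n)"
proof (rule ccontr)
  assume "\<nexists>m. T < (\<Sum>n\<in>{N..m}. f n)"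
  then have "(\<Sum>n\<le>m. f n) \<le> (\<Sum>n<N. f n) + T" for m
  proof -
    have "(\<Sum>n\<le>m. f n) \<le> (\<Sum>n\<in>{..<N} \<union> {N..m}. f n)"
      by (intro sum_mono2 f_nonneg) auto
    also have "\<dots> = (\<Sum>n<N. f n) + (\<Sum>n\<in>{N..m}. f n)"
      by (rule sum.union_disjoint) auto
    finally show ?thesis
      using \<open>\<nexists>m. T < (\<Sum>n\<in>{N..m}. f n)\<close> by (meson add_left_mono not_less order_trans)
  qed
  then have "summable f"
    by (intro bounded_imp_summable f_nonneg)
  with \<open>\<not> summable f\<close> show False ..
qed

lemma (in prob_space) AE_frequently_ex_not_in_if_indep_events:
  assumes indep: "indep_events B I" and G: "\<And>n. finite (G n)" "\<And>n. G n \<subseteq> I" "disjoint_family G"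
    and diverges: "\<not> summable (\<lambda>n. \<Sum>j\<in>G n. 1 - prob (B j))"
  shows "AE x in M. \<exists>\<^sub>F n in sequentially. \<exists>j\<in>G n. x \<notin> B j"
proof -
  define g where "g n = (\<Sum>j\<in>G n. 1 - prob (B j))" for n
  have g_nonneg: "0 \<le> g n" for n
    by (simp add: g_def sum_nonneg)
  have B_events: "B j \<in> events" if "j \<in> G n" for j n
    using indep G(2)[of n] that by (auto simp: indep_events_def)
  define E where "E N = {x\<in>space M. \<forall>j\<in>(\<Union>n\<in>{N..}. G n). x \<in> B j}" for N
  have E_events: "E N \<in> events" for N
    unfolding E_def using G
    by (intro sets.sets_Collect_countable_All')
       (auto intro: countable_finite B_events simp: Collect_conj_eq sets.Int_space_eq1)
  have E_le: "prob (E N) \<le> exp (- (\<Sum>n\<in>{N..m}. g n))" for N m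
  proof -
    have "(\<Sum>j\<in>(\<Union>n\<in>{N..m}. G n). 1 - prob (B j)) = (\<Sum>n\<in>{N..m}. g n)"
      unfolding g_def using G
      by (intro sum.UNION_disjoint) (auto simp: disjoint_family_on_def)
    moreover have "prob (E N) \<le> exp (- (\<Sum>j\<in>(\<Union>n\<in>{N..m}. G n). 1 - prob (B j)))"
      using G E_events
      by (intro prob_le_exp_neg_sum_if_subset_indep_events[OF indep]) (auto simp: E_def)
    ultimately show ?thesis by simp
  qed
  have "prob (E N) = 0" for N
  proof (rule ccontr)
    assume "prob (E N) \<noteq> 0"
    then have pos: "0 < prob (E N)" by (simp add: zero_less_measure_iff)
    obtain m where "- ln (prob (E N) / 2) < (\<Sum>n\<in>{N..m}. g n)"
      using unbounded_tail_sums_if_not_summable g_nonneg diverges unfolding g_def by meson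
    then have "exp (- (\<Sum>n\<in>{N..m}. g n)) < exp (ln (prob (E N) / 2))"
      by simp
    with E_le[of N m] pos show False by simp
  qed
  with E_events have "AE x in M. \<forall>N. x \<notin> E N"
    by (simp add: AE_all_countable AE_not_in emeasure_eq_measure null_sets_def)
  with AE_space show ?thesis
    by eventually_elim (fastforce simp: E_def frequently_sequentially)
qed

lemma log_plus_nonneg: "0 \<le> log_plus x"
  by (simp add: log_plus_def)

lemma borel_measurable_log_plus [measurable]: "log_plus \<in> borel_measurable borel"
  unfolding log_plus_def by measurable

lemma log_plus_less_iff:
  assumes "0 < s"
  shows "log_plus y < s \<longleftrightarrow> y < exp s"
proof (cases "y \<le> 1")
  case True
  moreover have "1 < exp s" using assms by simp
  ultimately have "y < exp s" by linarith
  with True assms show ?thesis by (simp add: log_plus_def)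
next
  case False
  then show ?thesis
    using exp_less_cancel_iff[of "ln y" s] by (simp add: log_plus_def)
qed

lemma summable_comparable_weights_iff:
  fixes u v p :: "nat \<Rightarrow> real"
  assumes "0 < c" and u_nonneg: "\<And>n. 0 \<le> u n" and p_nonneg: "\<And>n. 0 \<le> p n"
    and lower: "\<And>n. c * u n \<le> v n" and upper: "\<And>n. N \<le> n \<Longrightarrow> v n \<le> C * u n"
  shows "summable (\<lambda>n. u n * p n) \<longleftrightarrow> summable (\<lambda>n. v n * p n)"
proof
  assume "summable (\<lambda>n. u n * p n)"
  then have "summable (\<lambda>n. C * (u n * p n))"
    by (rule summable_mult)
  then show "summable (\<lambda>n. v n * p n)"
  proof (rule summable_comparison_test'[where N = N])
    fix n
    assume "N \<le> n"
    have "0 \<le> v n"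
      using lower[of n] \<open>0 < c\<close> u_nonneg[of n] by (meson mult_nonneg_nonneg less_imp_le order_trans)
    then show "norm (v n * p n) \<le> C * (u n * p n)"
      using upper[OF \<open>N \<le> n\<close>] p_nonneg[of n] by (simp add: abs_mult mult.assoc[symmetric] mult_right_mono)
  qed
next
  assume "summable (\<lambda>n. v n * p n)"
  then have "summable (\<lambda>n. 1 / c * (v n * p n))"
    by (rule summable_mult)
  then show "summable (\<lambda>n. u n * p n)"
  proof (rule summable_comparison_test')
    fix n
    have "c * (u n * p n) \<le> v n * p n"
      using lower[of n] p_nonneg[of n] by (simp add: mult.assoc[symmetric] mult_right_mono)
    then show "norm (u n * p n) \<le> 1 / c * (v n * p n)"
      using \<open>0 < c\<close> u_nonneg[of n] p_nonneg[of n] by (simp add: field_simps)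
  qed
qed

lemma log_plus_moment_less_top_iff_summable_row_tails:
  fixes V :: "'a \<Rightarrow> real" and K :: "nat \<Rightarrow> nat"
  assumes "prob_space Q" and [measurable]: "V \<in> borel_measurable Q" and "1 < s" "0 < c"
    and K_ge: "\<And>n. c * real n ^ m \<le> real (K n) + 1"
    and K_le: "\<And>n. 1 \<le> n \<Longrightarrow> real (K n) + 1 \<le> C * real n ^ m"
  shows "(\<integral>\<^sup>+x. ennreal (log_plus (V x) ^ Suc m) \<partial>Q) < \<infinity> \<longleftrightarrow>
    summable (\<lambda>n. (real (K n) + 1) * measure Q {x\<in>space Q. s ^ n \<le> V x})"
proof -
  interpret prob_space Q by fact
  define p where "p n = measure Q {x\<in>space Q. s ^ n \<le> V x}" for n
  have p_nonneg: "0 \<le> p n" for n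
    by (simp add: p_def measure_nonneg)
  have "0 < ln s"
    using \<open>1 < s\<close> by simp
  have tail_sets: "{x\<in>space Q. real n * ln s \<le> log_plus (V x)} = {x\<in>space Q. s ^ n \<le> V x}"
    if "1 \<le> n" for n
    using that \<open>1 < s\<close> log_plus_less_iff[of "real n * ln s"]
    by (auto simp: exp_of_nat_mult not_less[symmetric])
  have "(\<integral>\<^sup>+x. ennreal (log_plus (V x) ^ Suc m) \<partial>Q) < \<infinity> \<longleftrightarrow>
      summable (\<lambda>n. real n ^ m * measure Q {x\<in>space Q. real n * ln s \<le> log_plus (V x)})"
    using \<open>0 < ln s\<close> log_plus_nonneg
    by (intro nn_integral_power_less_top_iff_summable_scaled_tail[OF finite_measure_axioms]) auto
  also have "\<dots> \<longleftrightarrow> summable (\<lambda>n. real n ^ m * p n)"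
  proof (rule summable_cong)
    show "\<forall>\<^sub>F n in sequentially. real n ^ m * prob {x\<in>space Q. real n * ln s \<le> log_plus (V x)}
        = real n ^ m * p n"
      using eventually_ge_at_top[of 1]
    proof eventually_elim
      case (elim n)
      then show ?case by (simp only: tail_sets p_def)
    qed
  qed
  also have "\<dots> \<longleftrightarrow> summable (\<lambda>n. (real (K n) + 1) * p n)"
    using \<open>0 < c\<close> p_nonneg K_ge K_le
    by (intro summable_comparable_weights_iff[where N = 1 and C = C]) auto
  finally show ?thesis
    by (simp add: p_def)
qed

lemma AE_eventually_row_below_if_summable_row_tails:
  fixes V :: "'a \<Rightarrow> real" and W :: "nat \<Rightarrow> nat \<Rightarrow> 'a \<Rightarrow> real" and K :: "nat \<Rightarrow> nat"
  assumes "prob_space Q"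
    and ident: "\<And>i n. distr Q borel (W i n) = distr Q borel V"
    and [measurable]: "V \<in> borel_measurable Q" "\<And>i n. W i n \<in> borel_measurable Q"
    and tails: "summable (\<lambda>n. (real (K n) + 1) * measure Q {x\<in>space Q. b n \<le> V x})"
  shows "AE x in Q. \<forall>\<^sub>F n in sequentially. \<forall>i\<le>K n. W i n x < b n"
proof -
  interpret prob_space Q by fact
  define A where "A n = {x\<in>space Q. \<exists>i\<le>K n. b n \<le> W i n x}" for n
  have [measurable]: "A n \<in> events" for n
    unfolding A_def by measurable
  have "prob (A n) \<le> (real (K n) + 1) * measure Q {x\<in>space Q. b n \<le> V x}" for n
  proof -
    have "A n = (\<Union>i\<in>{..K n}. {x\<in>space Q. b n \<le> W i n x})"
      by (auto simp: A_def)
    then have "prob (A n) \<le> (\<Sum>i\<le>K n. measure Q {x\<in>space Q. b n \<le> W i n x})"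
      by (simp only:) (rule measure_UNION_le; simp)
    also have "\<dots> = (\<Sum>i\<le>K n. measure Q {x\<in>space Q. b n \<le> V x})"
      using ident by (intro sum.cong refl measure_Collect_eq_if_distr_eq) auto
    finally show ?thesis
      by (simp add: add.commute)
  qed
  then have "summable (\<lambda>n. prob (A n))"
    by (intro summable_comparison_test'[OF tails]) auto
  then have "AE x in Q. \<forall>\<^sub>F n in sequentially. x \<in> space Q - A n"
    by (intro borel_cantelli_AE1) (auto simp: emeasure_eq_measure)
  then show ?thesis
    by eventually_elim (fastforce simp: A_def elim!: eventually_mono)
qed

lemma AE_frequently_row_above_if_not_summable_row_tails:
  fixes V :: "'a \<Rightarrow> real" and W :: "nat \<Rightarrow> nat \<Rightarrow> 'a \<Rightarrow> real" and K :: "nat \<Rightarrow> nat"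
  assumes "prob_space Q"
    and indep: "prob_space.indep_vars Q (\<lambda>_. borel)
           (\<lambda>k. case k of None \<Rightarrow> V | Some (i, n) \<Rightarrow> W i n) UNIV"
    and ident: "\<And>i n. distr Q borel (W i n) = distr Q borel V"
    and [measurable]: "V \<in> borel_measurable Q" "\<And>i n. W i n \<in> borel_measurable Q"
    and tails: "\<not> summable (\<lambda>n. (real (K n) + 1) * measure Q {x\<in>space Q. b n \<le> V x})"
  shows "AE x in Q. \<exists>\<^sub>F n in sequentially. \<exists>i\<le>K n. b n \<le> W i n x"
proof -
  interpret prob_space Q by fact
  define B where "B j = {x\<in>space Q. case j of None \<Rightarrow> True | Some (i, n) \<Rightarrow> W i n x < b n}" for j
  define G where "G n = (\<lambda>i. Some (i, n)) ` {..K n}" for n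
  have indep_B: "indep_events B UNIV"
  proof -
    have "indep_events (\<lambda>j. {x\<in>space Q. (case j of None \<Rightarrow> \<lambda>_. True | Some (i, n) \<Rightarrow> \<lambda>y. y < b n)
        ((case j of None \<Rightarrow> V | Some (i, n) \<Rightarrow> W i n) x)}) UNIV"
      by (rule indep_eventsI_indep_vars[OF indep]) (auto split: option.split)
    moreover have "(\<lambda>j. {x\<in>space Q. (case j of None \<Rightarrow> \<lambda>_. True | Some (i, n) \<Rightarrow> \<lambda>y. y < b n)
        ((case j of None \<Rightarrow> V | Some (i, n) \<Rightarrow> W i n) x)}) = B"
      by (intro ext) (auto simp: B_def split: option.split)
    ultimately show ?thesis by simp
  qed
  have "prob (B (Some (i, n))) = 1 - measure Q {x\<in>space Q. b n \<le> V x}" for i n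
  proof -
    have "B (Some (i, n)) = space Q - {x\<in>space Q. b n \<le> W i n x}"
      by (auto simp: B_def)
    moreover have "measure Q {x\<in>space Q. b n \<le> W i n x} = measure Q {x\<in>space Q. b n \<le> V x}"
      by (rule measure_Collect_eq_if_distr_eq[OF ident]) auto
    ultimately show ?thesis
      by (simp add: prob_compl)
  qed
  then have "(\<Sum>j\<in>G n. 1 - prob (B j)) = (real (K n) + 1) * measure Q {x\<in>space Q. b n \<le> V x}" for n
    by (simp add: G_def sum.reindex inj_on_def)
  then have "AE x in Q. \<exists>\<^sub>F n in sequentially. \<exists>j\<in>G n. x \<notin> B j"
    using tails
    by (intro AE_frequently_ex_not_in_if_indep_events[OF indep_B]) (auto simp: G_def disjoint_family_on_def)
  with AE_space show ?thesis
    by eventually_elim (auto simp: G_def B_def not_less elim!: frequently_elim1)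
qed

lemma summable_row_sums_if_eventually_bounded:
  fixes w :: "nat \<Rightarrow> nat \<Rightarrow> real" and K :: "nat \<Rightarrow> nat"
  assumes "0 < a" "0 < r" "r < 1"
    and K_le: "\<And>n. 1 \<le> n \<Longrightarrow> real (K n) + 1 \<le> C * real n ^ m"
    and w_nonneg: "\<And>i n. 0 \<le> w i n"
    and bounded: "\<forall>\<^sub>F n in sequentially. \<forall>i\<le>K n. w i n < (r / a) ^ n"
  shows "summable (\<lambda>n. a ^ n * (\<Sum>i = 0..K n. w i n))"
proof (rule summable_comparison_test_ev)
  show "summable (\<lambda>n. C * (real n ^ m * r ^ n))"
    using assms by (intro summable_mult summable_power_mult_geometric) auto
  show "\<forall>\<^sub>F n in sequentially. norm (a ^ n * (\<Sum>i = 0..K n. w i n)) \<le> C * (real n ^ m * r ^ n)"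
    using bounded eventually_ge_at_top[of 1]
  proof eventually_elim
    case (elim n)
    have "(\<Sum>i = 0..K n. w i n) \<le> (\<Sum>i = 0..K n. (r / a) ^ n)"
      using elim by (intro sum_mono less_imp_le) auto
    then have "norm (a ^ n * (\<Sum>i = 0..K n. w i n)) \<le> a ^ n * (\<Sum>i = 0..K n. (r / a) ^ n)"
      using \<open>0 < a\<close> w_nonneg by (simp add: mult_left_mono sum_nonneg)
    also have "\<dots> = (real (K n) + 1) * r ^ n"
      using \<open>0 < a\<close> by (simp add: power_divide)
    also have "\<dots> \<le> C * real n ^ m * r ^ n"
      using K_le[OF elim(2)] \<open>0 < r\<close> by (intro mult_right_mono) auto
    finally show ?case by (simp add: mult.assoc)
  qed
qed

lemma not_summable_row_sums_if_frequently_large: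
  fixes w :: "nat \<Rightarrow> nat \<Rightarrow> real"
  assumes "0 < a" and w_nonneg: "\<And>i n. 0 \<le> w i n"
    and large: "\<exists>\<^sub>F n in sequentially. \<exists>i\<le>K n. (1 / a) ^ n \<le> w i n"
  shows "\<not> summable (\<lambda>n. a ^ n * (\<Sum>i = 0..K n. w i n))"
proof
  assume "summable (\<lambda>n. a ^ n * (\<Sum>i = 0..K n. w i n))"
  from order_tendstoD(2)[OF summable_LIMSEQ_zero[OF this]]
  have "\<forall>\<^sub>F n in sequentially. a ^ n * (\<Sum>i = 0..K n. w i n) < 1"
    by simp
  then have "\<forall>\<^sub>F n in sequentially. \<not> (\<exists>i\<le>K n. (1 / a) ^ n \<le> w i n)"
  proof eventually_elim
    case (elim n)
    show ?case
    proof
      assume "\<exists>i\<le>K n. (1 / a) ^ n \<le> w i n"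
      then obtain i where "i \<le> K n" "(1 / a) ^ n \<le> w i n"
        by blast
      then have "a ^ n * (1 / a) ^ n \<le> a ^ n * (\<Sum>i = 0..K n. w i n)"
        using \<open>0 < a\<close> w_nonneg by (intro mult_left_mono order_trans[OF _ member_le_sum]) auto
      with elim \<open>0 < a\<close> show False
        by (simp add: power_one_over)
    qed
  qed
  with large show False
    by (simp add: frequently_def)
qed

theorem lemma2p2:
  fixes Q :: "'a measure" and V :: "'a \<Rightarrow> real" and W :: "nat \<Rightarrow> nat \<Rightarrow> 'a \<Rightarrow> real"
    and d :: nat and c a :: real
  assumes "prob_space Q"
    and "d \<ge> 1" and "c > 0" and "0 < a" and "a < 1"
    and "prob_space.indep_vars Q (\<lambda>_. borel)
           (\<lambda>k. case k of None \<Rightarrow> V | Some (i, n) \<Rightarrow> W i n) UNIV"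
    and "\<And>i n. distr Q borel (W i n) = distr Q borel V"
    and "V \<in> borel_measurable Q" and "\<And>i n. W i n \<in> borel_measurable Q"
    and "AE x in Q. V x \<ge> 0"
    and "\<And>i n. AE x in Q. W i n x \<ge> 0"
  shows "(\<integral>\<^sup>+ x. ennreal ((log_plus (V x)) ^ d) \<partial>Q) < \<infinity> \<longleftrightarrow>
         (AE x in Q. summable (\<lambda>n. a ^ n *
             (\<Sum>i = 0..nat \<lfloor>c * real n ^ (d - 1)\<rfloor>. W i n x)))"
proof -
  obtain m where d: "d = Suc m"
    using \<open>d \<ge> 1\<close> by (cases d) auto
  define K where "K n = nat \<lfloor>c * real n ^ m\<rfloor>" for n
  have K_ge: "c * real n ^ m \<le> real (K n) + 1" for n
    unfolding K_def by linarith
  have K_le: "real (K n) + 1 \<le> (c + 1) * real n ^ m" if "1 \<le> n" for n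
  proof -
    have "real (K n) \<le> c * real n ^ m"
      using \<open>c > 0\<close> by (simp add: K_def)
    moreover have "1 \<le> real n ^ m"
      using that by simp
    ultimately show ?thesis by (simp add: algebra_simps)
  qed
  have moment_iff: "(\<integral>\<^sup>+ x. ennreal (log_plus (V x) ^ Suc m) \<partial>Q) < \<infinity> \<longleftrightarrow>
      summable (\<lambda>n. (real (K n) + 1) * measure Q {x\<in>space Q. s ^ n \<le> V x})" if "1 < s" for s
    using K_ge K_le \<open>c > 0\<close> that
    by (intro log_plus_moment_less_top_iff_summable_row_tails[OF assms(1,8)]) auto
  have W_nonneg: "AE x in Q. \<forall>i n. 0 \<le> W i n x"
    using assms(11) by (simp add: AE_all_countable)
  have "a * a < a * 1"
    using \<open>0 < a\<close> \<open>a < 1\<close> by (rule mult_strict_left_mono[rotated])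
  then have "0 < sqrt a" "sqrt a < 1" "1 < sqrt a / a"
    using \<open>0 < a\<close> \<open>a < 1\<close> real_less_rsqrt[of a a] by (auto simp: power2_eq_square)
  show ?thesis
    unfolding d diff_Suc_1 K_def[symmetric]
  proof
    assume "(\<integral>\<^sup>+ x. ennreal (log_plus (V x) ^ Suc m) \<partial>Q) < \<infinity>"
    then have "AE x in Q. \<forall>\<^sub>F n in sequentially. \<forall>i\<le>K n. W i n x < (sqrt a / a) ^ n"
      using moment_iff[OF \<open>1 < sqrt a / a\<close>]
      by (intro AE_eventually_row_below_if_summable_row_tails[OF assms(1,7-9)]) auto
    with W_nonneg show "AE x in Q. summable (\<lambda>n. a ^ n * (\<Sum>i = 0..K n. W i n x))"
      by eventually_elim
        (rule summable_row_sums_if_eventually_bounded[OF \<open>0 < a\<close> \<open>0 < sqrt a\<close> \<open>sqrt a < 1\<close> K_le]; auto)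
  next
    assume summable: "AE x in Q. summable (\<lambda>n. a ^ n * (\<Sum>i = 0..K n. W i n x))"
    show "(\<integral>\<^sup>+ x. ennreal (log_plus (V x) ^ Suc m) \<partial>Q) < \<infinity>"
    proof (rule ccontr)
      assume "\<not> ?thesis"
      then have "AE x in Q. \<exists>\<^sub>F n in sequentially. \<exists>i\<le>K n. (1 / a) ^ n \<le> W i n x"
        using moment_iff[of "1 / a"] \<open>0 < a\<close> \<open>a < 1\<close>
        by (intro AE_frequently_row_above_if_not_summable_row_tails[OF assms(1,6-9)]) auto
      with W_nonneg summable have "AE x in Q. False"
        by eventually_elim (use not_summable_row_sums_if_frequently_large[OF \<open>0 < a\<close>] in simp)
      with assms(1) show False
        by (simp add: prob_space.AE_False)
    qed
  qed
qed

end
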